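(* Let $\mathcal{A}$ be a homogeneous Koszul algebra over a field of characteristic $0$ and $(V,d)$ a chain complex. Let $g_0$ be the degree $0$ part of $\mathfrak{g}_{\mathcal{A},V}=\mathrm{Hom}(\overline{\mathcal{A}}^{\text{!`}},\mathrm{End}(V))$ and let $\Gamma=(g_0,\mathrm{BCH},0)$ be the gauge group. Then: (1) the exponential map $\lambda\mapsto e^\lambda$ is a group isomorphism from $\Gamma$ onto the group of $\infty$-isotopies, i.e. the set of degree $0$ maps $f:\mathcal{A}^{\text{!`}}\to\mathrm{End}(V)$ with $f(\mathrm{I})=\mathrm{id}_V$, equipped with the product $\star$ and unit $\mathrm{id}_V$ (the element $1$); (2) the Deligne groupoid of $\mathfrak{g}_{\mathcal{A},V}$ is isomorphic to the groupoid whose objects are the homotopy $\mathcal{A}$-module structures (i.e. $\mathcal{A}_\infty=\Omega\mathcal{A}^{\text{!`}}$-module structures) on $V$ and whose morphisms are the $\infty$-isotopies; concretely, for Maurer–Cartan elements $\bar\alpha,\bar\beta$ and $\lambda\in g_0$, one has $\delta+\bar\beta=e^{\mathrm{ad}_\lambda}(\delta+\bar\alpha)$ if and only if $e^\lambda$ is an $\infty$-isotopy from $\delta+\bar\alpha$ to $\delta+\bar\beta$.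
   Context: Homological grading. $\mathcal{A}^{\text{!`}}$ is the (connected, weight graded) Koszul dual coalgebra with coproduct $\Delta$, weight $0$ part spanned by $\mathrm{I}$, and coaugmentation ideal $\overline{\mathcal{A}}^{\text{!`}}$. The unital dg associative convolution algebra $\mathfrak{a}_{\mathcal{A},V}=\mathrm{Hom}(\mathcal{A}^{\text{!`}},\mathrm{End}(V))$ has product $f\star g=\mu\circ(f\otimes g)\circ\Delta$ ($\mu$ = composition), differential $(\partial_V)_*$ induced by $d$, and unit $1:\mathrm{I}\mapsto\mathrm{id}_V$; $\mathfrak{g}_{\mathcal{A},V}=\mathrm{Hom}(\overline{\mathcal{A}}^{\text{!`}},\mathrm{End}(V))$ is a sub dg algebra and a dg Lie algebra under $[x,y]=x\star y-(-1)^{|x||y|}y\star x$. A Maurer–Cartan element is $\bar\alpha\in\mathfrak{g}_{\mathcal{A},V}$ of degree $-1$ with $(\partial_V)_*(\bar\alpha)+\bar\alpha\star\bar\alpha=0$; these are exactly the homotopy $\mathcal{A}$-module structures on $V$. Let $\delta\in\mathfrak{a}_{\mathcal{A},V}$ be the map $\mathrm{I}\mapsto d$ (zero elsewhere) and write $\alpha=\delta+\bar\alpha$. The exponential is $e^\lambda=\sum_n\lambda^{\star n}/n!$ and $\mathrm{ad}_\lambda(x)=\lambda\star x-x\star\lambda$, $e^{\mathrm{ad}_\lambda}=\sum_n\mathrm{ad}_\lambda^n/n!$ (convergent by the weight grading). The gauge group $\Gamma$ is $g_0$ with product $\mathrm{BCH}(x,y)=x+y+\frac12[x,y]+\cdots$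 (Baker–Campbell–Hausdorff series) and unit $0$. The Deligne groupoid has objects the Maurer–Cartan elements and a morphism $\lambda:\bar\alpha\to\bar\beta$ for each $\lambda\in g_0$ with $\delta+\bar\beta=e^{\mathrm{ad}_\lambda}(\delta+\bar\alpha)$. For homotopy module structures $\alpha=\delta+\bar\alpha$, $\beta=\delta+\bar\beta$ on $V$, an $\infty$-morphism $\alpha\rightsquigarrow\beta$ is a degree $0$ map $f:\mathcal{A}^{\text{!`}}\to\mathrm{End}(V)$ with $f\star\alpha=\beta\star f$; it is an $\infty$-isotopy if $f(\mathrm{I})=\mathrm{id}_V$; composition is given by $\star$. *)

theory Defs
  imports Complex_Main "HOL-Algebra.Group"
begin

text \<open>The coalgebra is described by a homogeneous basis indexed by the type 'b
  (every element of 'b is a basis vector), with weight wt, homological degree deg,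
  a distinguished basis vector e spanning the weight 0 part (the element I), and
  structure constants cf b b1 b2 of the coproduct:
  Delta(b) = sum over (b1,b2) of cf b b1 b2 times (b1 tensor b2).\<close>

definition cop_supp :: "('b \<Rightarrow> 'b \<Rightarrow> 'b \<Rightarrow> 'k::field) \<Rightarrow> 'b \<Rightarrow> ('b \<times> 'b) set" where
  "cop_supp cf b = {(b1, b2). cf b b1 b2 \<noteq> 0}"

definition wg_coalgebra ::
  "('b \<Rightarrow> 'b \<Rightarrow> 'b \<Rightarrow> 'k::field) \<Rightarrow> 'b \<Rightarrow> ('b \<Rightarrow> nat) \<Rightarrow> ('b \<Rightarrow> int) \<Rightarrow> bool" where
  "wg_coalgebra cf e wt deg \<longleftrightarrow>
     (\<forall>b. finite (cop_supp cf b)) \<and>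
     (\<forall>b b1 b2. cf b b1 b2 \<noteq> 0 \<longrightarrow> wt b1 + wt b2 = wt b \<and> deg b1 + deg b2 = deg b) \<and>
     (\<forall>b. wt b = 0 \<longleftrightarrow> b = e) \<and> deg e = 0 \<and>
     (\<forall>b b2. cf b e b2 = (if b2 = b then 1 else 0)) \<and>
     (\<forall>b b1. cf b b1 e = (if b1 = b then 1 else 0)) \<and>
     (\<forall>b b1 b2 b3.
        (\<Sum>b'\<in>{b'. cf b b' b3 \<noteq> 0}. cf b b' b3 * cf b' b1 b2)
      = (\<Sum>b'\<in>{b'. cf b b1 b' \<noteq> 0}. cf b b1 b' * cf b' b2 b3))"

definition graded_vs :: "('k::field_char_0 \<Rightarrow> 'v::ab_group_add \<Rightarrow> 'v) \<Rightarrow> (int \<Rightarrow> 'v set) \<Rightarrow> bool" where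
  "graded_vs s Vg \<longleftrightarrow> vector_space s \<and> (\<forall>i. module.subspace s (Vg i)) \<and>
     (\<forall>v. \<exists>!u. (\<forall>i. u i \<in> Vg i) \<and> finite {i. u i \<noteq> 0} \<and> v = (\<Sum>i\<in>{i. u i \<noteq> 0}. u i))"

definition hom_end :: "('k::field_char_0 \<Rightarrow> 'v::ab_group_add \<Rightarrow> 'v) \<Rightarrow> (int \<Rightarrow> 'v set) \<Rightarrow> int \<Rightarrow> ('v \<Rightarrow> 'v) \<Rightarrow> bool" where
  "hom_end s Vg q \<phi> \<longleftrightarrow> Vector_Spaces.linear s s \<phi> \<and> (\<forall>i. \<forall>x\<in>Vg i. \<phi> x \<in> Vg (i + q))"

definition chain_complex :: "('k::field_char_0 \<Rightarrow> 'v::ab_group_add \<Rightarrow> 'v) \<Rightarrow> (int \<Rightarrow> 'v set) \<Rightarrow> ('v \<Rightarrow> 'v) \<Rightarrow> bool" where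
  "chain_complex s Vg d \<longleftrightarrow> graded_vs s Vg \<and> hom_end s Vg (-1) d \<and> (\<forall>x. d (d x) = 0)"

text \<open>A linear map C \<rightarrow> End(V) is determined by its values on the basis 'b.
  conv_deg n f: f is homogeneous of degree n.\<close>

definition conv_deg :: "('k::field_char_0 \<Rightarrow> 'v::ab_group_add \<Rightarrow> 'v) \<Rightarrow> (int \<Rightarrow> 'v set) \<Rightarrow> ('b \<Rightarrow> int)
    \<Rightarrow> int \<Rightarrow> ('b \<Rightarrow> 'v \<Rightarrow> 'v) \<Rightarrow> bool" where
  "conv_deg s Vg deg n f \<longleftrightarrow> (\<forall>b. hom_end s Vg (deg b + n) (f b))"

text \<open>Convolution product f \<star> g = \<mu> \<circ> (f \<otimes> g) \<circ> \<Delta>, where n is the degree of g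
  (Koszul sign (-1)^(|g| |b1|)).\<close>

definition cstar :: "('k::field_char_0 \<Rightarrow> 'v::ab_group_add \<Rightarrow> 'v) \<Rightarrow> ('b \<Rightarrow> 'b \<Rightarrow> 'b \<Rightarrow> 'k) \<Rightarrow> ('b \<Rightarrow> int)
    \<Rightarrow> int \<Rightarrow> ('b \<Rightarrow> 'v \<Rightarrow> 'v) \<Rightarrow> ('b \<Rightarrow> 'v \<Rightarrow> 'v) \<Rightarrow> 'b \<Rightarrow> 'v \<Rightarrow> 'v" where
  "cstar s cf deg n f g = (\<lambda>b x. \<Sum>(b1, b2)\<in>cop_supp cf b.
      s (cf b b1 b2 * (if even (n * deg b1) then 1 else -1)) (f b1 (g b2 x)))"

definition cunit :: "'b \<Rightarrow> 'b \<Rightarrow> 'v::ab_group_add \<Rightarrow> 'v" where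
  "cunit e = (\<lambda>b. if b = e then id else (\<lambda>x. 0))"

definition cdelta :: "'b \<Rightarrow> ('v::ab_group_add \<Rightarrow> 'v) \<Rightarrow> 'b \<Rightarrow> 'v \<Rightarrow> 'v" where
  "cdelta e d = (\<lambda>b. if b = e then d else (\<lambda>x. 0))"

definition cadd :: "('b \<Rightarrow> 'v::ab_group_add \<Rightarrow> 'v) \<Rightarrow> ('b \<Rightarrow> 'v \<Rightarrow> 'v) \<Rightarrow> 'b \<Rightarrow> 'v \<Rightarrow> 'v" where
  "cadd f g = (\<lambda>b x. f b x + g b x)"

fun cpow :: "('k::field_char_0 \<Rightarrow> 'v::ab_group_add \<Rightarrow> 'v) \<Rightarrow> ('b \<Rightarrow> 'b \<Rightarrow> 'b \<Rightarrow> 'k) \<Rightarrow> ('b \<Rightarrow> int) \<Rightarrow> 'b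
    \<Rightarrow> nat \<Rightarrow> ('b \<Rightarrow> 'v \<Rightarrow> 'v) \<Rightarrow> 'b \<Rightarrow> 'v \<Rightarrow> 'v" where
  "cpow s cf deg e 0 f = cunit e"
| "cpow s cf deg e (Suc k) f = cstar s cf deg 0 f (cpow s cf deg e k f)"

text \<open>Evaluated on a basis vector b, the sum is
  written up to n = wt b; for \<lambda> vanishing on I (i.e. \<lambda> in g) the omitted terms vanish,
  which is the convergence "by the weight grading".\<close>

definition cexp :: "('k::field_char_0 \<Rightarrow> 'v::ab_group_add \<Rightarrow> 'v) \<Rightarrow> ('b \<Rightarrow> 'b \<Rightarrow> 'b \<Rightarrow> 'k) \<Rightarrow> ('b \<Rightarrow> int) \<Rightarrow> 'b
    \<Rightarrow> ('b \<Rightarrow> nat) \<Rightarrow> ('b \<Rightarrow> 'v \<Rightarrow> 'v) \<Rightarrow> 'b \<Rightarrow> 'v \<Rightarrow> 'v" where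
  "cexp s cf deg e wt f = (\<lambda>b x. \<Sum>k\<le>wt b. s (1 / fact k) (cpow s cf deg e k f b x))"

definition clog :: "('k::field_char_0 \<Rightarrow> 'v::ab_group_add \<Rightarrow> 'v) \<Rightarrow> ('b \<Rightarrow> 'b \<Rightarrow> 'b \<Rightarrow> 'k) \<Rightarrow> ('b \<Rightarrow> int) \<Rightarrow> 'b
    \<Rightarrow> ('b \<Rightarrow> nat) \<Rightarrow> ('b \<Rightarrow> 'v \<Rightarrow> 'v) \<Rightarrow> 'b \<Rightarrow> 'v \<Rightarrow> 'v" where
  "clog s cf deg e wt u = (\<lambda>b x. \<Sum>k\<in>{1..wt b}.
      s ((-1) ^ (k + 1) / of_nat k) (cpow s cf deg e k (\<lambda>c y. u c y - cunit e c y) b x))"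

definition cBCH :: "('k::field_char_0 \<Rightarrow> 'v::ab_group_add \<Rightarrow> 'v) \<Rightarrow> ('b \<Rightarrow> 'b \<Rightarrow> 'b \<Rightarrow> 'k) \<Rightarrow> ('b \<Rightarrow> int) \<Rightarrow> 'b
    \<Rightarrow> ('b \<Rightarrow> nat) \<Rightarrow> ('b \<Rightarrow> 'v \<Rightarrow> 'v) \<Rightarrow> ('b \<Rightarrow> 'v \<Rightarrow> 'v) \<Rightarrow> 'b \<Rightarrow> 'v \<Rightarrow> 'v" where
  "cBCH s cf deg e wt x y =
     clog s cf deg e wt (cstar s cf deg 0 (cexp s cf deg e wt x) (cexp s cf deg e wt y))"

definition cad :: "('k::field_char_0 \<Rightarrow> 'v::ab_group_add \<Rightarrow> 'v) \<Rightarrow> ('b \<Rightarrow> 'b \<Rightarrow> 'b \<Rightarrow> 'k) \<Rightarrow> ('b \<Rightarrow> int)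
    \<Rightarrow> int \<Rightarrow> ('b \<Rightarrow> 'v \<Rightarrow> 'v) \<Rightarrow> ('b \<Rightarrow> 'v \<Rightarrow> 'v) \<Rightarrow> 'b \<Rightarrow> 'v \<Rightarrow> 'v" where
  "cad s cf deg n lam x = (\<lambda>b v. cstar s cf deg n lam x b v - cstar s cf deg 0 x lam b v)"

definition cexp_ad :: "('k::field_char_0 \<Rightarrow> 'v::ab_group_add \<Rightarrow> 'v) \<Rightarrow> ('b \<Rightarrow> 'b \<Rightarrow> 'b \<Rightarrow> 'k) \<Rightarrow> ('b \<Rightarrow> int)
    \<Rightarrow> ('b \<Rightarrow> nat) \<Rightarrow> int \<Rightarrow> ('b \<Rightarrow> 'v \<Rightarrow> 'v) \<Rightarrow> ('b \<Rightarrow> 'v \<Rightarrow> 'v) \<Rightarrow> 'b \<Rightarrow> 'v \<Rightarrow> 'v" where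
  "cexp_ad s cf deg wt n lam x =
     (\<lambda>b v. \<Sum>k\<le>wt b. s (1 / fact k) ((cad s cf deg n lam ^^ k) x b v))"

text \<open>g_0: degree 0 elements of Hom(\<bar>C, End V), i.e. vanishing on I.\<close>

definition g0 :: "('k::field_char_0 \<Rightarrow> 'v::ab_group_add \<Rightarrow> 'v) \<Rightarrow> (int \<Rightarrow> 'v set) \<Rightarrow> ('b \<Rightarrow> int) \<Rightarrow> 'b
    \<Rightarrow> ('b \<Rightarrow> 'v \<Rightarrow> 'v) set" where
  "g0 s Vg deg e = {f. conv_deg s Vg deg 0 f \<and> f e = (\<lambda>x. 0)}"

text \<open>Maurer-Cartan elements: \<bar>\<alpha> in g of degree -1 with (\<partial>_V)_*(\<bar>\<alpha>) + \<bar>\<alpha> \<star> \<bar>\<alpha> = 0,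
  where \<partial>_V(\<phi>) = d \<circ> \<phi> - (-1)^|\<phi>| \<phi> \<circ> d.\<close>

definition MC :: "('k::field_char_0 \<Rightarrow> 'v::ab_group_add \<Rightarrow> 'v) \<Rightarrow> (int \<Rightarrow> 'v set) \<Rightarrow> ('v \<Rightarrow> 'v)
    \<Rightarrow> ('b \<Rightarrow> 'b \<Rightarrow> 'b \<Rightarrow> 'k) \<Rightarrow> ('b \<Rightarrow> int) \<Rightarrow> 'b \<Rightarrow> ('b \<Rightarrow> 'v \<Rightarrow> 'v) set" where
  "MC s Vg d cf deg e = {a. conv_deg s Vg deg (-1) a \<and> a e = (\<lambda>x. 0) \<and>
     (\<forall>b x. (d (a b x) - s (if even (deg b - 1) then 1 else -1) (a b (d x)))
            + cstar s cf deg (-1) a a b x = 0)}"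

definition inf_isotopies :: "('k::field_char_0 \<Rightarrow> 'v::ab_group_add \<Rightarrow> 'v) \<Rightarrow> (int \<Rightarrow> 'v set) \<Rightarrow> ('b \<Rightarrow> int) \<Rightarrow> 'b
    \<Rightarrow> ('b \<Rightarrow> 'v \<Rightarrow> 'v) set" where
  "inf_isotopies s Vg deg e = {f. conv_deg s Vg deg 0 f \<and> f e = id}"

definition inf_morphism :: "('k::field_char_0 \<Rightarrow> 'v::ab_group_add \<Rightarrow> 'v) \<Rightarrow> (int \<Rightarrow> 'v set) \<Rightarrow> ('b \<Rightarrow> 'b \<Rightarrow> 'b \<Rightarrow> 'k)
    \<Rightarrow> ('b \<Rightarrow> int) \<Rightarrow> ('b \<Rightarrow> 'v \<Rightarrow> 'v) \<Rightarrow> ('b \<Rightarrow> 'v \<Rightarrow> 'v) \<Rightarrow> ('b \<Rightarrow> 'v \<Rightarrow> 'v) \<Rightarrow> bool" where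
  "inf_morphism s Vg cf deg alpha beta f \<longleftrightarrow>
     conv_deg s Vg deg 0 f \<and> cstar s cf deg (-1) f alpha = cstar s cf deg 0 beta f"

definition gauge_group where
  "gauge_group s Vg cf deg e wt =
     \<lparr>carrier = g0 s Vg deg e, monoid.mult = cBCH s cf deg e wt, one = (\<lambda>b x. 0)\<rparr>"

definition isotopy_group where
  "isotopy_group s Vg cf deg e =
     \<lparr>carrier = inf_isotopies s Vg deg e, monoid.mult = cstar s cf deg 0, one = cunit e\<rparr>"

end

theory Submission
  imports Defs "HOL-Computational_Algebra.Formal_Power_Series" "HOL-Library.Function_Algebras"
begin

text \<open>A formal power series \<open>p\<close> can be evaluated at any \<open>w\<close> vanishing on \<open>I\<close>, because the
  \<open>k\<close>-th convolution power of \<open>w\<close> vanishes on basis vectors of weight below \<open>k\<close>.  Evaluation is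
  a ring homomorphism from \<open>k[[X]]\<close> to the convolution algebra and turns composition of series
  into composition of evaluations, so \<open>exp\<close> and \<open>log\<close> are mutually inverse between \<open>g\<^sub>0\<close> and
  the \<open>\<infinity>\<close>-isotopies, and \<open>BCH(x, y) = log (exp x \<star> exp y)\<close> makes \<open>exp\<close> a group isomorphism.
  For the Deligne groupoid, \<open>ad \<lambda>\<close> is the sum of the commuting operators "left multiplication
  by \<open>\<lambda>\<close>" (with a Koszul sign) and "right multiplication by \<open>-\<lambda>\<close>", so
  \<open>exp (ad \<lambda>) \<alpha> = exp \<lambda> \<star> \<alpha> \<star> exp (-\<lambda>)\<close> and the gauge equation is equivalent to the
  \<open>\<infinity>\<close>-morphism equation \<open>exp \<lambda> \<star> \<alpha> = \<beta> \<star> exp \<lambda>\<close>.\<close>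

unbundle fps_syntax

lemma sum_fun_apply2: "(\<Sum>i\<in>A. F i) b x = (\<Sum>i\<in>A. F i b x)"
  by (induct A rule: infinite_finite_induct) simp_all

lemma sum_comm3:
  "(\<Sum>a\<in>A. \<Sum>x\<in>B. \<Sum>y\<in>C. (G a x y :: 'a::comm_monoid_add)) = (\<Sum>x\<in>B. \<Sum>y\<in>C. \<Sum>a\<in>A. G a x y)"
proof -
  have "(\<Sum>a\<in>A. \<Sum>x\<in>B. \<Sum>y\<in>C. G a x y) = (\<Sum>x\<in>B. \<Sum>a\<in>A. \<Sum>y\<in>C. G a x y)"
    by (rule sum.swap)
  also have "\<dots> = (\<Sum>x\<in>B. \<Sum>y\<in>C. \<Sum>a\<in>A. G a x y)"
    by (intro sum.cong refl sum.swap)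
  finally show ?thesis .
qed

lemma sum_atMost_triangle:
  fixes G :: "nat \<Rightarrow> nat \<Rightarrow> 'a::comm_monoid_add"
  assumes "\<And>i j. N < i + j \<Longrightarrow> G i j = 0"
  shows "(\<Sum>i\<le>N. \<Sum>j\<le>N. G i j) = (\<Sum>k\<le>N. \<Sum>i\<le>k. G i (k - i))"
proof -
  have "(\<Sum>i\<le>N. \<Sum>j\<le>N. G i j) = (\<Sum>(i,j)\<in>{..N} \<times> {..N}. G i j)"
    by (simp add: sum.cartesian_product)
  also have "\<dots> = (\<Sum>(i,j)\<in>{(i,j). i + j \<le> N}. G i j)"
    by (rule sum.mono_neutral_right) (auto, metis assms not_le)
  also have "\<dots> = (\<Sum>k\<le>N. \<Sum>i\<le>k. G i (k - i))"
    by (rule sum.triangle_reindex_eq)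
  finally show ?thesis .
qed

lemma sum_atMost_single:
  "(\<And>k. k \<noteq> m \<Longrightarrow> f k = 0) \<Longrightarrow> (\<Sum>k\<le>(n::nat). f k) = (if m \<le> n then f m else (0::'a::comm_monoid_add))"
  by (induct n) (auto simp: le_Suc_eq)

lemma inverse_fact_mult_binomial:
  "i \<le> k \<Longrightarrow> (1 / fact k * of_nat (k choose i) :: 'a::field_char_0) = 1 / fact i * (1 / fact (k - i))"
  by (simp add: binomial_fact)

locale conv_algebra = vector_space s for s :: "'k::field_char_0 \<Rightarrow> 'v::ab_group_add \<Rightarrow> 'v" +
  fixes cf :: "'b \<Rightarrow> 'b \<Rightarrow> 'b \<Rightarrow> 'k" and e :: 'b and wt :: "'b \<Rightarrow> nat" and deg :: "'b \<Rightarrow> int"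
  assumes coalgebra: "wg_coalgebra cf e wt deg"
begin

sublocale vector_space_pair s s ..

lemma finite_cop_supp: "finite (cop_supp cf b)"
  using coalgebra by (simp add: wg_coalgebra_def)
lemma cf_wt: "cf b b1 b2 \<noteq> 0 \<Longrightarrow> wt b1 + wt b2 = wt b"
  using coalgebra by (simp add: wg_coalgebra_def)
lemma cf_deg: "cf b b1 b2 \<noteq> 0 \<Longrightarrow> deg b1 + deg b2 = deg b"
  using coalgebra by (simp add: wg_coalgebra_def)
lemma wt_eq_0_iff: "wt b = 0 \<longleftrightarrow> b = e"
  using coalgebra by (simp add: wg_coalgebra_def)
lemma deg_e: "deg e = 0"
  using coalgebra by (simp add: wg_coalgebra_def)
lemma cf_e_left: "cf b e b2 = (if b2 = b then 1 else 0)"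
  using coalgebra by (simp add: wg_coalgebra_def)
lemma cf_e_right: "cf b b1 e = (if b1 = b then 1 else 0)"
  using coalgebra by (simp add: wg_coalgebra_def)
lemma cf_coassoc:
  "(\<Sum>b'\<in>{b'. cf b b' b3 \<noteq> 0}. cf b b' b3 * cf b' b1 b2)
     = (\<Sum>b'\<in>{b'. cf b b1 b' \<noteq> 0}. cf b b1 b' * cf b' b2 b3)"
  using coalgebra unfolding wg_coalgebra_def by blast

lemma cop_supp_wt_le:
  assumes "(b1, b2) \<in> cop_supp cf b" shows "wt b1 \<le> wt b" "wt b2 \<le> wt b"
proof -
  have "wt b1 + wt b2 = wt b" using assms cf_wt by (simp add: cop_supp_def)
  then show "wt b1 \<le> wt b" "wt b2 \<le> wt b" by linarith+
qed

lemma cop_supp_e: "cop_supp cf e = {(e, e)}"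
proof -
  have "cf e b1 b2 \<noteq> 0 \<Longrightarrow> b1 = e \<and> b2 = e" for b1 b2
    using cf_wt[of e b1 b2] wt_eq_0_iff[of e] wt_eq_0_iff[of b1] wt_eq_0_iff[of b2] by simp
  then show ?thesis by (auto simp: cop_supp_def cf_e_left)
qed

text \<open>Associativity of \<open>\<star>\<close> is checked on \<open>b\<close> by expanding both sides as sums over
  \<open>cop_components2 b\<close>, a finite set containing every basis vector of the iterated coproduct
  of \<open>b\<close>; coassociativity then matches the coefficients.\<close>

definition cop_components :: "'b \<Rightarrow> 'b set" where
  "cop_components b = fst ` cop_supp cf b \<union> snd ` cop_supp cf b"

definition cop_components2 :: "'b \<Rightarrow> 'b set" where
  "cop_components2 b = cop_components b \<union> \<Union> (cop_components ` cop_components b)"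

lemma finite_cop_components2: "finite (cop_components2 b)"
  using finite_cop_supp by (simp add: cop_components2_def cop_components_def)

lemma cop_components_subset2: "cop_components b \<subseteq> cop_components2 b"
  by (auto simp: cop_components2_def)

lemma cf_nonzero_components: "cf b x y \<noteq> 0 \<Longrightarrow> x \<in> cop_components b \<and> y \<in> cop_components b"
  by (force simp: cop_components_def cop_supp_def)

lemma cf_nonzero_components2:
  "cf b x y \<noteq> 0 \<Longrightarrow> cop_components x \<subseteq> cop_components2 b \<and> cop_components y \<subseteq> cop_components2 b"
  by (auto simp: cop_components2_def dest: cf_nonzero_components)

lemma cf_coassoc_components2:
  "(\<Sum>b'\<in>cop_components2 b. cf b b' b3 * cf b' b1 b2) = (\<Sum>b'\<in>cop_components2 b. cf b b1 b' * cf b' b2 b3)"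
proof -
  have "(\<Sum>b'\<in>cop_components2 b. cf b b' b3 * cf b' b1 b2)
      = (\<Sum>b'\<in>{b'. cf b b' b3 \<noteq> 0}. cf b b' b3 * cf b' b1 b2)"
    by (rule sum.mono_neutral_right[OF finite_cop_components2])
      (auto dest: cf_nonzero_components intro: cop_components_subset2[THEN subsetD])
  also have "\<dots> = (\<Sum>b'\<in>{b'. cf b b1 b' \<noteq> 0}. cf b b1 b' * cf b' b2 b3)"
    by (rule cf_coassoc)
  also have "\<dots> = (\<Sum>b'\<in>cop_components2 b. cf b b1 b' * cf b' b2 b3)"
    by (rule sum.mono_neutral_left[OF finite_cop_components2])
      (auto dest: cf_nonzero_components intro: cop_components_subset2[THEN subsetD])
  finally show ?thesis .
qed

lemma sum_cop_supp_eq_square: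
  assumes "finite D" "cop_components b \<subseteq> D" "\<And>x y. cf b x y = 0 \<Longrightarrow> G x y = 0"
  shows "(\<Sum>(x,y)\<in>cop_supp cf b. G x y) = (\<Sum>x\<in>D. \<Sum>y\<in>D. G x y)"
proof -
  have "(\<Sum>(x,y)\<in>cop_supp cf b. G x y) = (\<Sum>(x,y)\<in>D \<times> D. G x y)"
  proof (rule sum.mono_neutral_left)
    show "cop_supp cf b \<subseteq> D \<times> D"
      using assms(2) cf_nonzero_components by (auto simp: cop_supp_def)
    show "\<forall>i\<in>D \<times> D - cop_supp cf b. (case i of (x, y) \<Rightarrow> G x y) = 0"
      using assms(3) by (auto simp: cop_supp_def)
  qed (use assms(1) in simp)
  also have "\<dots> = (\<Sum>x\<in>D. \<Sum>y\<in>D. G x y)" by (simp add: sum.cartesian_product)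
  finally show ?thesis .
qed

section \<open>The convolution product\<close>

abbreviation star :: "('b \<Rightarrow> 'v \<Rightarrow> 'v) \<Rightarrow> ('b \<Rightarrow> 'v \<Rightarrow> 'v) \<Rightarrow> 'b \<Rightarrow> 'v \<Rightarrow> 'v" where
  "star f g \<equiv> cstar s cf deg 0 f g"

lemma star_apply: "star f g b x = (\<Sum>(b1, b2)\<in>cop_supp cf b. s (cf b b1 b2) (f b1 (g b2 x)))"
  by (simp add: cstar_def)

lemma star_apply_square:
  "finite D \<Longrightarrow> cop_components b \<subseteq> D \<Longrightarrow>
     star f g b x = (\<Sum>b1\<in>D. \<Sum>b2\<in>D. s (cf b b1 b2) (f b1 (g b2 x)))"
  unfolding star_apply by (rule sum_cop_supp_eq_square) auto

lemma star_apply_e: "star f g e x = f e (g e x)"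
  by (simp add: star_apply cop_supp_e cf_e_left)

definition linear_valued :: "('b \<Rightarrow> 'v \<Rightarrow> 'v) \<Rightarrow> bool" where
  "linear_valued f \<longleftrightarrow> (\<forall>b. Vector_Spaces.linear s s (f b))"

lemma linear_valuedD: "linear_valued f \<Longrightarrow> Vector_Spaces.linear s s (f b)"
  by (simp add: linear_valued_def)

lemma cunit_apply: "cunit e b y = (if b = e then y else 0)"
  by (simp add: cunit_def)

lemma star_unit_left: "star (cunit e) f = f"
proof (intro ext)
  fix b x
  have "star (cunit e) f b x = (\<Sum>p\<in>cop_supp cf b. if (e, b) = p then f b x else 0)"
    unfolding star_apply
    by (rule sum.cong) (auto simp: cunit_apply cf_e_left split: if_split_asm)
  also have "\<dots> = f b x"
    using finite_cop_supp[of b] by (simp add: cop_supp_def cf_e_left)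
  finally show "star (cunit e) f b x = f b x" .
qed

lemma star_unit_right: "linear_valued f \<Longrightarrow> star f (cunit e) = f"
proof (intro ext)
  fix b x assume f: "linear_valued f"
  have "star f (cunit e) b x = (\<Sum>p\<in>cop_supp cf b. if (b, e) = p then f b x else 0)"
    unfolding star_apply
    by (rule sum.cong) (auto simp: cunit_apply cf_e_right linear_0[OF linear_valuedD[OF f]]
        split: if_split_asm)
  also have "\<dots> = f b x"
    using finite_cop_supp[of b] by (simp add: cop_supp_def cf_e_right)
  finally show "star f (cunit e) b x = f b x" .
qed

lemma scale_star_apply_components2:
  "s (cf b b' b3) (star f g b' y) =
     (\<Sum>b1\<in>cop_components2 b. \<Sum>b2\<in>cop_components2 b. s (cf b b' b3 * cf b' b1 b2) (f b1 (g b2 y)))"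
proof (cases "cf b b' b3 = 0")
  case False
  then have "cop_components b' \<subseteq> cop_components2 b" by (simp add: cf_nonzero_components2)
  then show ?thesis by (simp add: star_apply_square[OF finite_cop_components2] scale_sum_right)
qed simp

lemma scale_apply_star_components2:
  assumes f: "linear_valued f"
  shows "s (cf b b1 b') (f b1 (star g h b' y)) =
    (\<Sum>b2\<in>cop_components2 b. \<Sum>b3\<in>cop_components2 b. s (cf b b1 b' * cf b' b2 b3) (f b1 (g b2 (h b3 y))))"
proof (cases "cf b b1 b' = 0")
  case False
  then have "cop_components b' \<subseteq> cop_components2 b" by (simp add: cf_nonzero_components2)
  then show ?thesis
    by (simp add: star_apply_square[OF finite_cop_components2] scale_sum_right
        linear_sum[OF linear_valuedD[OF f]] linear_scale[OF linear_valuedD[OF f]])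
qed simp

lemma star_assoc:
  assumes f: "linear_valued f"
  shows "star (star f g) h = star f (star g h)"
proof (intro ext)
  fix b x
  let ?D = "cop_components2 b"
  have D: "finite ?D" "cop_components b \<subseteq> ?D"
    by (rule finite_cop_components2, rule cop_components_subset2)
  have "star (star f g) h b x = (\<Sum>b'\<in>?D. \<Sum>b3\<in>?D. s (cf b b' b3) (star f g b' (h b3 x)))"
    by (rule star_apply_square[OF D])
  also have "\<dots> = (\<Sum>b'\<in>?D. \<Sum>b3\<in>?D. \<Sum>b1\<in>?D. \<Sum>b2\<in>?D.
      s (cf b b' b3 * cf b' b1 b2) (f b1 (g b2 (h b3 x))))"
    by (simp add: scale_star_apply_components2)
  also have "\<dots> = (\<Sum>b3\<in>?D. \<Sum>b1\<in>?D. \<Sum>b2\<in>?D. \<Sum>b'\<in>?D.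
      s (cf b b' b3 * cf b' b1 b2) (f b1 (g b2 (h b3 x))))"
    by (subst sum.swap, intro sum.cong refl sum_comm3)
  also have "\<dots> = (\<Sum>b1\<in>?D. \<Sum>b2\<in>?D. \<Sum>b3\<in>?D. \<Sum>b'\<in>?D.
      s (cf b b' b3 * cf b' b1 b2) (f b1 (g b2 (h b3 x))))"
    by (rule sum_comm3)
  also have "\<dots> = (\<Sum>b1\<in>?D. \<Sum>b2\<in>?D. \<Sum>b3\<in>?D.
      s (\<Sum>b'\<in>?D. cf b b' b3 * cf b' b1 b2) (f b1 (g b2 (h b3 x))))"
    by (simp only: scale_sum_left)
  also have "\<dots> = (\<Sum>b1\<in>?D. \<Sum>b2\<in>?D. \<Sum>b3\<in>?D.
      s (\<Sum>b'\<in>?D. cf b b1 b' * cf b' b2 b3) (f b1 (g b2 (h b3 x))))"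
    by (simp only: cf_coassoc_components2)
  also have "\<dots> = (\<Sum>b1\<in>?D. \<Sum>b'\<in>?D. \<Sum>b2\<in>?D. \<Sum>b3\<in>?D.
      s (cf b b1 b' * cf b' b2 b3) (f b1 (g b2 (h b3 x))))"
    unfolding scale_sum_left by (rule sum.cong[OF refl], rule sum_comm3[symmetric])
  also have "\<dots> = star f (star g h) b x"
    by (simp add: scale_apply_star_components2[OF f] star_apply_square[OF D])
  finally show "star (star f g) h b x = star f (star g h) b x" .
qed

definition cscale :: "'k \<Rightarrow> ('b \<Rightarrow> 'v \<Rightarrow> 'v) \<Rightarrow> 'b \<Rightarrow> 'v \<Rightarrow> 'v" where
  "cscale c f = (\<lambda>b x. s c (f b x))"

lemma cscale_apply: "cscale c f b x = s c (f b x)"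
  by (simp add: cscale_def)

lemma cscale_cscale: "cscale c (cscale d f) = cscale (c * d) f"
  by (simp add: cscale_def)
lemma cscale_one: "cscale 1 f = f"
  by (simp add: cscale_def)
lemma cscale_zero: "cscale 0 f = 0"
  by (intro ext) (simp add: cscale_def)
lemma cscale_add_left: "cscale (a + c) f = cscale a f + cscale c f"
  by (intro ext) (simp add: cscale_def scale_left_distrib)
lemma cscale_add_right: "cscale a (f + g) = cscale a f + cscale a g"
  by (intro ext) (simp add: cscale_def scale_right_distrib)
lemma cscale_sum: "cscale c (\<Sum>i\<in>A. F i) = (\<Sum>i\<in>A. cscale c (F i))"
  by (intro ext) (simp add: cscale_def sum_fun_apply2 scale_sum_right)

lemma star_add_left: "star (f + g) h = star f h + star g h"
  by (intro ext) (simp add: star_apply scale_right_distrib sum.distrib split_def)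
lemma star_add_right: "linear_valued f \<Longrightarrow> star f (g + h) = star f g + star f h"
  by (intro ext) (simp add: star_apply scale_right_distrib sum.distrib split_def
      linear_add[OF linear_valuedD])
lemma star_diff_right: "linear_valued f \<Longrightarrow> star f (g - h) = star f g - star f h"
  by (intro ext) (simp add: star_apply scale_right_diff_distrib sum_subtractf split_def
      linear_diff[OF linear_valuedD])
lemma star_cscale_left: "star (cscale c f) h = cscale c (star f h)"
  by (intro ext) (simp add: star_apply cscale_def scale_sum_right split_def mult.commute)
lemma star_cscale_right: "linear_valued f \<Longrightarrow> star f (cscale c h) = cscale c (star f h)"
  by (intro ext) (simp add: star_apply cscale_def scale_sum_right split_def mult.commute
      linear_scale[OF linear_valuedD])
lemma star_zero_left: "star 0 h = 0"
  by (intro ext) (simp add: star_apply split_def)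
lemma star_zero_right: "linear_valued f \<Longrightarrow> star f 0 = 0"
  by (intro ext) (simp add: star_apply split_def linear_0[OF linear_valuedD])
lemma star_neg_right: "linear_valued f \<Longrightarrow> star f (- g) = - star f g"
  using star_diff_right[of f 0 g] by (simp add: star_zero_right)

lemma star_sum_left: "star (\<Sum>i\<in>A. F i) h = (\<Sum>i\<in>A. star (F i) h)"
proof (induct A rule: infinite_finite_induct)
  case (insert a A)
  then show ?case by (simp only: sum.insert[OF insert(1,2)] star_add_left)
next
  case (infinite A)
  then show ?case by (simp only: sum.infinite[OF infinite] star_zero_left)
qed (simp only: sum.empty star_zero_left)

lemma star_sum_right:
  assumes f: "linear_valued f" shows "star f (\<Sum>i\<in>A. F i) = (\<Sum>i\<in>A. star f (F i))"
proof (induct A rule: infinite_finite_induct)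
  case (insert a A)
  then show ?case by (simp only: sum.insert[OF insert(1,2)] star_add_right[OF f])
next
  case (infinite A)
  then show ?case by (simp only: sum.infinite[OF infinite] star_zero_right[OF f])
qed (simp only: sum.empty star_zero_right[OF f])

lemma module_s: "module s"
  using vector_space_axioms by (simp add: module_iff_vector_space)

lemma linear_sum_fun:
  "(\<And>i. i \<in> A \<Longrightarrow> Vector_Spaces.linear s s (F i)) \<Longrightarrow> Vector_Spaces.linear s s (\<lambda>x. \<Sum>i\<in>A. F i x)"
  by (rule module_hom_sum) (simp_all add: module_s)

lemma linear_valued_star:
  assumes f: "linear_valued f" and g: "linear_valued g" shows "linear_valued (star f g)"
  unfolding linear_valued_def
proof
  fix b
  have "Vector_Spaces.linear s s (\<lambda>x. f b1 (g b2 x))" for b1 b2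
    using Vector_Spaces.linear_compose[OF linear_valuedD[OF g] linear_valuedD[OF f]]
    by (simp add: o_def)
  then show "Vector_Spaces.linear s s (star f g b)"
    unfolding star_apply split_def by (intro linear_sum_fun module_hom_scale)
qed

lemma linear_valued_neg: "linear_valued f \<Longrightarrow> linear_valued (- f)"
  unfolding linear_valued_def fun_Compl_def by (intro allI module_hom_neg) auto
lemma linear_valued_cscale: "linear_valued f \<Longrightarrow> linear_valued (cscale c f)"
  unfolding linear_valued_def cscale_def by (intro allI module_hom_scale) auto
lemma linear_valued_sum: "(\<And>i. i \<in> A \<Longrightarrow> linear_valued (F i)) \<Longrightarrow> linear_valued (\<Sum>i\<in>A. F i)"
  unfolding linear_valued_def sum_fun_apply2[abs_def] by (intro allI linear_sum_fun) blast
lemma linear_valued_cunit: "linear_valued (cunit e)"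
  unfolding linear_valued_def cunit_def by (simp add: linear_id module_hom_zero)

lemma star_local:
  assumes "\<And>c. wt c \<le> wt b \<Longrightarrow> f c = f' c" "\<And>c. wt c \<le> wt b \<Longrightarrow> g c = g' c"
  shows "star f g b = star f' g' b"
  unfolding star_apply
proof (intro ext sum.cong refl, clarify)
  fix x b1 b2 assume "(b1, b2) \<in> cop_supp cf b"
  then show "s (cf b b1 b2) (f b1 (g b2 x)) = s (cf b b1 b2) (f' b1 (g' b2 x))"
    using assms cop_supp_wt_le by metis
qed

section \<open>Evaluation of formal power series\<close>

definition vanishes_below :: "nat \<Rightarrow> ('b \<Rightarrow> 'v \<Rightarrow> 'v) \<Rightarrow> bool" where
  "vanishes_below m f \<longleftrightarrow> (\<forall>b. wt b < m \<longrightarrow> f b = (\<lambda>x. 0))"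

lemma vanishes_below_0: "vanishes_below 0 f"
  by (simp add: vanishes_below_def)

lemma vanishes_below_Suc_0_iff: "vanishes_below (Suc 0) f \<longleftrightarrow> f e = (\<lambda>x. 0)"
  by (auto simp: vanishes_below_def wt_eq_0_iff)

lemma vanishes_below_neg: "vanishes_below m f \<Longrightarrow> vanishes_below m (- f)"
  by (simp add: vanishes_below_def fun_Compl_def)

lemma vanishes_below_star:
  assumes f: "linear_valued f" "vanishes_below m f" and g: "vanishes_below n g"
  shows "vanishes_below (m + n) (star f g)"
  unfolding vanishes_below_def
proof (intro allI impI ext)
  fix b x assume wb: "wt b < m + n"
  show "star f g b x = 0" unfolding star_apply
  proof (rule sum.neutral, clarify)
    fix b1 b2 assume "(b1, b2) \<in> cop_supp cf b"
    then have "wt b1 + wt b2 = wt b" using cf_wt by (simp add: cop_supp_def)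
    then have "wt b1 < m \<or> wt b2 < n" using wb by linarith
    then show "s (cf b b1 b2) (f b1 (g b2 x)) = 0"
      using f g by (auto simp: vanishes_below_def linear_0[OF linear_valuedD])
  qed
qed

abbreviation cpower :: "nat \<Rightarrow> ('b \<Rightarrow> 'v \<Rightarrow> 'v) \<Rightarrow> 'b \<Rightarrow> 'v \<Rightarrow> 'v" where
  "cpower k w \<equiv> cpow s cf deg e k w"

lemma linear_valued_cpow: "linear_valued w \<Longrightarrow> linear_valued (cpower k w)"
  by (induct k) (simp_all add: linear_valued_cunit linear_valued_star)

lemma vanishes_below_cpow: "linear_valued w \<Longrightarrow> vanishes_below 1 w \<Longrightarrow> vanishes_below k (cpower k w)"
proof (induct k)
  case (Suc k)
  then show ?case using vanishes_below_star[of w 1 k "cpower k w"] by simp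
qed (simp add: vanishes_below_0)

lemma cpow_add: "linear_valued w \<Longrightarrow> cpower (i + j) w = star (cpower i w) (cpower j w)"
  by (induct i) (simp_all add: star_unit_left star_assoc)

lemma cpow_Suc_right: "linear_valued w \<Longrightarrow> cpower (Suc k) w = star (cpower k w) w"
  using cpow_add[of w k 1] by (simp add: star_unit_right)

text \<open>On a basis vector of weight \<open>n\<close> the series is cut off after degree \<open>n\<close>; when \<open>w\<close>
  vanishes on \<open>I\<close> the omitted powers vanish there, so this is the value of the weight-adically
  convergent series \<open>p(w)\<close>.\<close>

definition fps_eval :: "('b \<Rightarrow> 'v \<Rightarrow> 'v) \<Rightarrow> 'k fps \<Rightarrow> 'b \<Rightarrow> 'v \<Rightarrow> 'v" where
  "fps_eval w p = (\<lambda>b x. \<Sum>k\<le>wt b. s (p $ k) (cpower k w b x))"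

lemma fps_eval_eq_partial_sum:
  assumes "linear_valued w" "vanishes_below 1 w" "wt b \<le> N"
  shows "fps_eval w p b = (\<Sum>k\<le>N. cscale (p $ k) (cpower k w)) b"
proof (intro ext)
  fix x
  have "(\<Sum>k\<le>wt b. s (p $ k) (cpower k w b x)) = (\<Sum>k\<le>N. s (p $ k) (cpower k w b x))"
    by (rule sum.mono_neutral_left)
      (use assms vanishes_below_cpow[OF assms(1,2)] in \<open>auto simp: vanishes_below_def\<close>)
  then show "fps_eval w p b x = (\<Sum>k\<le>N. cscale (p $ k) (cpower k w)) b x"
    by (simp add: fps_eval_def sum_fun_apply2 cscale_apply)
qed

lemma fps_eval_exp_eq_partial_sum:
  "linear_valued w \<Longrightarrow> vanishes_below 1 w \<Longrightarrow> wt b \<le> N \<Longrightarrow>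
     fps_eval w (fps_exp 1) b = (\<Sum>k\<le>N. cscale (1 / fact k) (cpower k w)) b"
  by (simp add: fps_eval_eq_partial_sum)

lemma fps_eval_apply_e: "fps_eval w p e x = s (p $ 0) x"
  using wt_eq_0_iff[of e] by (simp add: fps_eval_def cunit_apply)

lemma fps_eval_add: "fps_eval w (p + q) = fps_eval w p + fps_eval w q"
  by (intro ext) (simp add: fps_eval_def scale_left_distrib sum.distrib)
lemma fps_eval_neg: "fps_eval w (- p) = - fps_eval w p"
  by (intro ext) (simp add: fps_eval_def sum_negf)
lemma fps_eval_diff: "fps_eval w (p - q) = fps_eval w p - fps_eval w q"
  by (intro ext) (simp add: fps_eval_def scale_left_diff_distrib sum_subtractf)

lemma fps_eval_const: "fps_eval w (fps_const c) = cscale c (cunit e)"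
proof (intro ext)
  fix b x
  have "fps_eval w (fps_const c) b x = (if 0 \<le> wt b then s (fps_const c $ 0) (cpower 0 w b x) else 0)"
    unfolding fps_eval_def by (rule sum_atMost_single) simp
  then show "fps_eval w (fps_const c) b x = cscale c (cunit e) b x"
    by (simp add: cscale_apply)
qed

lemma fps_eval_zero: "fps_eval 0 p = cscale (p $ 0) (cunit e)"
proof (intro ext)
  fix b x
  have "fps_eval 0 p b x = (if 0 \<le> wt b then s (p $ 0) (cpower 0 0 b x) else 0)"
    unfolding fps_eval_def
  proof (rule sum_atMost_single)
    fix k :: nat assume "k \<noteq> 0"
    then obtain j where "k = Suc j" by (cases k) auto
    then show "s (p $ k) (cpower k 0 b x) = 0" by (simp add: star_zero_left)
  qed
  then show "fps_eval 0 p b x = cscale (p $ 0) (cunit e) b x" by (simp add: cscale_apply)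
qed

lemma fps_eval_one: "fps_eval w 1 = cunit e"
  using fps_eval_const[of w 1] by (simp add: cscale_one)

lemma fps_eval_X:
  assumes w: "linear_valued w" "vanishes_below 1 w" shows "fps_eval w fps_X = w"
proof (intro ext)
  fix b x
  have "fps_eval w fps_X b x = (if 1 \<le> wt b then s (fps_X $ 1) (cpower 1 w b x) else 0)"
    unfolding fps_eval_def by (rule sum_atMost_single) simp
  also have "\<dots> = w b x"
    using w by (auto simp: star_unit_right vanishes_below_def)
  finally show "fps_eval w fps_X b x = w b x" .
qed

lemma star_partial_sums:
  assumes "linear_valued w"
  shows "star (\<Sum>k\<le>N. cscale (p $ k) (cpower k w)) (\<Sum>k\<le>N. cscale (q $ k) (cpower k w))
    = (\<Sum>i\<le>N. \<Sum>j\<le>N. cscale (p $ i * q $ j) (cpower (i + j) w))"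
proof -
  have "linear_valued (cscale (p $ i) (cpower i w))" for i
    by (intro linear_valued_cscale linear_valued_cpow assms)
  then show ?thesis
    by (simp add: star_sum_left star_sum_right star_cscale_left star_cscale_right cscale_sum
        cscale_cscale linear_valued_cpow cpow_add assms mult.commute)
qed

lemma fps_eval_mult:
  assumes w: "linear_valued w" "vanishes_below 1 w"
  shows "fps_eval w (p * q) = star (fps_eval w p) (fps_eval w q)"
proof (intro ext)
  fix b x
  let ?N = "wt b"
  have "star (fps_eval w p) (fps_eval w q) b
      = star (\<Sum>k\<le>?N. cscale (p $ k) (cpower k w)) (\<Sum>k\<le>?N. cscale (q $ k) (cpower k w)) b"
    by (intro star_local fps_eval_eq_partial_sum[OF w])
  then have "star (fps_eval w p) (fps_eval w q) b x
      = star (\<Sum>k\<le>?N. cscale (p $ k) (cpower k w)) (\<Sum>k\<le>?N. cscale (q $ k) (cpower k w)) b x"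
    by simp
  also have "\<dots> = (\<Sum>i\<le>?N. \<Sum>j\<le>?N. s (p $ i * q $ j) (cpower (i + j) w b x))"
    by (simp add: star_partial_sums w(1) sum_fun_apply2 cscale_apply)
  also have "\<dots> = (\<Sum>k\<le>?N. \<Sum>i\<le>k. s (p $ i * q $ (k - i)) (cpower k w b x))"
    by (subst sum_atMost_triangle)
      (use vanishes_below_cpow[OF w] in \<open>auto simp: vanishes_below_def\<close>)
  also have "\<dots> = fps_eval w (p * q) b x"
    by (simp add: fps_eval_def fps_mult_nth atLeast0AtMost scale_sum_left)
  finally show "fps_eval w (p * q) b x = star (fps_eval w p) (fps_eval w q) b x" ..
qed

lemma cpow_fps_eval:
  assumes "linear_valued w" "vanishes_below 1 w" shows "cpower k (fps_eval w q) = fps_eval w (q ^ k)"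
  by (induct k) (simp_all add: fps_eval_one fps_eval_mult[OF assms])

lemma fps_eval_compose:
  assumes w: "linear_valued w" "vanishes_below 1 w" and q: "q $ 0 = 0"
  shows "fps_eval w (p oo q) = fps_eval (fps_eval w q) p"
proof (intro ext)
  fix b x
  let ?N = "wt b"
  have "fps_eval (fps_eval w q) p b x = (\<Sum>k\<le>?N. \<Sum>n\<le>?N. s (p $ k * (q ^ k) $ n) (cpower n w b x))"
    unfolding fps_eval_def[of "fps_eval w q" p] cpow_fps_eval[OF w]
    by (simp add: fps_eval_def scale_sum_right)
  also have "\<dots> = (\<Sum>n\<le>?N. \<Sum>k\<le>?N. s (p $ k * (q ^ k) $ n) (cpower n w b x))"
    by (rule sum.swap)
  also have "\<dots> = (\<Sum>n\<le>?N. \<Sum>k\<in>{0..n}. s (p $ k * (q ^ k) $ n) (cpower n w b x))"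
  proof (rule sum.cong[OF refl], rule sum.mono_neutral_right)
    fix n assume "n \<in> {..?N}"
    then show "{0..n} \<subseteq> {..?N}" by auto
  next
    fix n
    show "\<forall>i\<in>{..?N} - {0..n}. s (p $ i * (q ^ i) $ n) (cpower n w b x) = 0"
      using startsby_zero_power_prefix[OF q] by auto
  qed simp
  also have "\<dots> = fps_eval w (p oo q) b x"
    by (simp add: fps_eval_def fps_compose_nth scale_sum_left)
  finally show "fps_eval w (p oo q) b x = fps_eval (fps_eval w q) p b x" ..
qed

lemma cexp_eq_fps_eval: "cexp s cf deg e wt f = fps_eval f (fps_exp 1)"
  by (intro ext) (simp add: cexp_def fps_eval_def)

lemma clog_eq_fps_eval: "clog s cf deg e wt u = fps_eval (u - cunit e) (fps_ln 1)"
proof (intro ext)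
  fix b x
  have "fps_eval (u - cunit e) (fps_ln 1) b x
      = (\<Sum>k\<in>{1..wt b}. s (fps_ln 1 $ k) (cpower k (u - cunit e) b x))"
    unfolding fps_eval_def by (rule sum.mono_neutral_right) (auto simp: fps_ln_nth)
  also have "\<dots> = clog s cf deg e wt u b x"
  proof -
    have "fps_ln (1::'k) $ k = (-1) ^ (k + 1) / of_nat k" if "k \<ge> 1" for k
      using that by (cases k) (simp_all add: fps_ln_nth)
    moreover have "(\<lambda>c y. u c y - cunit e c y) = u - cunit e" by (intro ext) simp
    ultimately show ?thesis unfolding clog_def by (intro sum.cong refl) auto
  qed
  finally show "clog s cf deg e wt u b x = fps_eval (u - cunit e) (fps_ln 1) b x" ..
qed

lemma fps_ln_compose_exp: "fps_ln 1 oo (fps_exp 1 - 1) = (fps_X :: 'k fps)"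
  using fps_inv_fps_exp_compose(1)[of "1::'k"] fps_ln_fps_exp_inv[of "1::'k"] by simp

lemma fps_exp_compose_ln: "fps_exp 1 oo fps_ln 1 = fps_X + (1 :: 'k fps)"
proof -
  have "(fps_exp 1 - 1) oo fps_ln 1 = (fps_X :: 'k fps)"
    using fps_inv_fps_exp_compose(2)[of "1::'k"] fps_ln_fps_exp_inv[of "1::'k"] by simp
  then show ?thesis by (simp add: fps_compose_sub_distrib algebra_simps)
qed

lemma clog_cexp:
  assumes f: "linear_valued f" "vanishes_below 1 f"
  shows "clog s cf deg e wt (cexp s cf deg e wt f) = f"
proof -
  have "clog s cf deg e wt (cexp s cf deg e wt f) = fps_eval (fps_eval f (fps_exp 1 - 1)) (fps_ln 1)"
    by (simp add: clog_eq_fps_eval cexp_eq_fps_eval fps_eval_diff fps_eval_one)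
  also have "\<dots> = fps_eval f (fps_ln 1 oo (fps_exp 1 - 1))"
    by (rule fps_eval_compose[OF f, symmetric]) simp
  also have "\<dots> = f" by (simp add: fps_ln_compose_exp fps_eval_X[OF f])
  finally show ?thesis .
qed

lemma cexp_clog:
  assumes u: "linear_valued (u - cunit e)" "vanishes_below 1 (u - cunit e)"
  shows "cexp s cf deg e wt (clog s cf deg e wt u) = u"
proof -
  have "cexp s cf deg e wt (clog s cf deg e wt u) = fps_eval (fps_eval (u - cunit e) (fps_ln 1)) (fps_exp 1)"
    by (simp add: clog_eq_fps_eval cexp_eq_fps_eval)
  also have "\<dots> = fps_eval (u - cunit e) (fps_exp 1 oo fps_ln 1)"
    by (rule fps_eval_compose[OF u, symmetric]) simp
  also have "\<dots> = u" by (simp add: fps_exp_compose_ln fps_eval_add fps_eval_X[OF u] fps_eval_one)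
  finally show ?thesis .
qed

lemma cexp_neg_star:
  assumes f: "linear_valued f" "vanishes_below 1 f"
  shows "star (cexp s cf deg e wt (- f)) (cexp s cf deg e wt f) = cunit e"
    and "star (cexp s cf deg e wt f) (cexp s cf deg e wt (- f)) = cunit e"
proof -
  have neg_X: "- f = fps_eval f (- fps_X)" by (simp add: fps_eval_neg fps_eval_X[OF f])
  have "cexp s cf deg e wt (- f) = fps_eval (fps_eval f (- fps_X)) (fps_exp 1)"
    unfolding cexp_eq_fps_eval neg_X[symmetric] ..
  also have "\<dots> = fps_eval f (fps_exp 1 oo (- fps_X))"
    by (rule fps_eval_compose[OF f, symmetric]) simp
  finally have neg: "fps_eval (- f) (fps_exp 1) = fps_eval f (fps_exp (-1))"
    by (simp add: cexp_eq_fps_eval)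
  show "star (cexp s cf deg e wt (- f)) (cexp s cf deg e wt f) = cunit e"
    "star (cexp s cf deg e wt f) (cexp s cf deg e wt (- f)) = cunit e"
    unfolding cexp_eq_fps_eval neg fps_eval_mult[OF f, symmetric] fps_exp_add_mult[symmetric]
    by (simp_all add: fps_eval_one)
qed

section \<open>The adjoint action\<close>

definition parity_sign :: "int \<Rightarrow> 'k" where
  "parity_sign n = (if even n then 1 else -1)"

definition sign_twist :: "('b \<Rightarrow> 'v \<Rightarrow> 'v) \<Rightarrow> 'b \<Rightarrow> 'v \<Rightarrow> 'v" where
  "sign_twist f = (\<lambda>b x. s (parity_sign (deg b)) (f b x))"

lemma cstar_minus_one: "cstar s cf deg (-1) f g = star (sign_twist f) g"
  by (intro ext) (simp add: cstar_def sign_twist_def parity_sign_def split_def)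

lemma linear_valued_sign_twist: "linear_valued f \<Longrightarrow> linear_valued (sign_twist f)"
  unfolding linear_valued_def sign_twist_def by (intro allI module_hom_scale) auto

lemma vanishes_below_sign_twist: "vanishes_below m f \<Longrightarrow> vanishes_below m (sign_twist f)"
  by (simp add: vanishes_below_def sign_twist_def)

lemma sign_twist_star:
  assumes f: "linear_valued f" shows "sign_twist (star f g) = star (sign_twist f) (sign_twist g)"
proof (intro ext)
  fix b x
  show "sign_twist (star f g) b x = star (sign_twist f) (sign_twist g) b x"
    unfolding sign_twist_def star_apply scale_sum_right
  proof (rule sum.cong[OF refl], clarify)
    fix b1 b2 assume "(b1, b2) \<in> cop_supp cf b"
    then have "deg b = deg b1 + deg b2" using cf_deg by (simp add: cop_supp_def)
    moreover have "parity_sign (m + n) = parity_sign m * parity_sign n" for m n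
      by (auto simp: parity_sign_def)
    ultimately show "s (parity_sign (deg b)) (s (cf b b1 b2) (f b1 (g b2 x))) =
       s (cf b b1 b2) (s (parity_sign (deg b1)) (f b1 (s (parity_sign (deg b2)) (g b2 x))))"
      by (simp add: linear_scale[OF linear_valuedD[OF f]] mult.commute mult.left_commute)
  qed
qed

lemma sign_twist_cunit: "sign_twist (cunit e) = cunit e"
  by (intro ext) (simp add: sign_twist_def cunit_apply deg_e parity_sign_def)

lemma sign_twist_cpow: "linear_valued w \<Longrightarrow> sign_twist (cpower k w) = cpower k (sign_twist w)"
  by (induct k) (simp_all add: sign_twist_cunit sign_twist_star)

lemma sign_twist_fps_eval:
  assumes "linear_valued w" shows "sign_twist (fps_eval w p) = fps_eval (sign_twist w) p"
proof (intro ext)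
  fix b x
  have "cpower k (sign_twist w) b x = s (parity_sign (deg b)) (cpower k w b x)" for k
    using sign_twist_cpow[OF assms] by (metis sign_twist_def)
  then show "sign_twist (fps_eval w p) b x = fps_eval (sign_twist w) p b x"
    by (simp add: sign_twist_def fps_eval_def scale_sum_right mult.commute)
qed

lemma cad_minus_one: "linear_valued y \<Longrightarrow> cad s cf deg (-1) lam y = star (sign_twist lam) y + star y (- lam)"
  by (intro ext) (simp add: cad_def cstar_minus_one star_neg_right)

lemma cad_sum:
  assumes "linear_valued lam" "\<And>i. i \<in> A \<Longrightarrow> linear_valued (F i)"
  shows "cad s cf deg (-1) lam (\<Sum>i\<in>A. cscale (c i) (F i)) = (\<Sum>i\<in>A. cscale (c i) (cad s cf deg (-1) lam (F i)))"
  using assms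
  by (simp add: cad_minus_one linear_valued_sum linear_valued_cscale star_sum_left star_sum_right
      linear_valued_sign_twist star_cscale_left star_cscale_right cscale_sum cscale_add_right sum.distrib)

text \<open>The terms of the binomial expansion of the powers of \<open>ad \<lambda>\<close>.\<close>

definition ad_term :: "('b \<Rightarrow> 'v \<Rightarrow> 'v) \<Rightarrow> ('b \<Rightarrow> 'v \<Rightarrow> 'v) \<Rightarrow> nat \<Rightarrow> nat \<Rightarrow> 'b \<Rightarrow> 'v \<Rightarrow> 'v" where
  "ad_term lam x i j = star (star (cpower i (sign_twist lam)) x) (cpower j (- lam))"

context
  fixes lam x :: "'b \<Rightarrow> 'v \<Rightarrow> 'v"
  assumes lam: "linear_valued lam" and x: "linear_valued x"
begin

lemma linear_valued_ad_term: "linear_valued (ad_term lam x i j)"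
  unfolding ad_term_def
  by (intro linear_valued_star linear_valued_cpow linear_valued_sign_twist linear_valued_neg lam x)

lemma cad_ad_term: "cad s cf deg (-1) lam (ad_term lam x i j) = ad_term lam x (Suc i) j + ad_term lam x i (Suc j)"
proof -
  have "star (sign_twist lam) (ad_term lam x i j) = ad_term lam x (Suc i) j"
    unfolding ad_term_def
    by (simp add: star_assoc linear_valued_sign_twist linear_valued_cpow linear_valued_star lam x)
  moreover have "star (ad_term lam x i j) (- lam) = ad_term lam x i (Suc j)"
    unfolding ad_term_def
    using cpow_Suc_right[OF linear_valued_neg[OF lam], of j]
    by (simp add: star_assoc linear_valued_star linear_valued_cpow linear_valued_sign_twist
        linear_valued_neg lam x del: cpow.simps)
  ultimately show ?thesis by (simp add: cad_minus_one linear_valued_ad_term)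
qed

lemma cad_power_expansion:
  "(cad s cf deg (-1) lam ^^ k) x = (\<Sum>i\<le>k. cscale (of_nat (k choose i)) (ad_term lam x i (k - i)))"
proof (induct k)
  case 0
  have "ad_term lam x 0 0 = x" unfolding ad_term_def by (simp add: star_unit_left star_unit_right x)
  then show ?case by (simp add: cscale_one)
next
  case (Suc k)
  let ?T = "ad_term lam x"
  have "(cad s cf deg (-1) lam ^^ Suc k) x
      = (\<Sum>i\<le>k. cscale (of_nat (k choose i)) (?T (Suc i) (k - i)))
        + (\<Sum>i\<le>k. cscale (of_nat (k choose i)) (?T i (Suc k - i)))"
    by (simp add: Suc cad_sum lam linear_valued_ad_term cad_ad_term cscale_add_right sum.distrib
        Suc_diff_le)
  also have "(\<Sum>i\<le>k. cscale (of_nat (k choose i)) (?T i (Suc k - i)))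
      = ?T 0 (Suc k) + (\<Sum>i\<le>k. cscale (of_nat (k choose Suc i)) (?T (Suc i) (k - i)))"
  proof -
    have "(\<Sum>i\<le>k. cscale (of_nat (k choose i)) (?T i (Suc k - i)))
        = (\<Sum>i\<le>Suc k. cscale (of_nat (k choose i)) (?T i (Suc k - i)))"
      by (simp add: cscale_zero binomial_eq_0)
    also have "\<dots> = ?T 0 (Suc k) + (\<Sum>i\<le>k. cscale (of_nat (k choose Suc i)) (?T (Suc i) (k - i)))"
      by (subst sum.atMost_Suc_shift) (simp add: cscale_one del: sum.atMost_Suc)
    finally show ?thesis .
  qed
  also have "(\<Sum>i\<le>k. cscale (of_nat (k choose i)) (?T (Suc i) (k - i)))
      + (?T 0 (Suc k) + (\<Sum>i\<le>k. cscale (of_nat (k choose Suc i)) (?T (Suc i) (k - i))))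
      = (\<Sum>i\<le>Suc k. cscale (of_nat (Suc k choose i)) (?T i (Suc k - i)))"
    by (subst sum.atMost_Suc_shift)
      (simp add: cscale_one cscale_add_left sum.distrib ac_simps del: sum.atMost_Suc)
  finally show ?case .
qed

lemma vanishes_below_ad_term: "vanishes_below 1 lam \<Longrightarrow> vanishes_below (i + j) (ad_term lam x i j)"
proof -
  assume v: "vanishes_below 1 lam"
  have "vanishes_below (i + 0) (star (cpower i (sign_twist lam)) x)"
    by (intro vanishes_below_star vanishes_below_cpow vanishes_below_sign_twist linear_valued_cpow
        linear_valued_sign_twist lam v vanishes_below_0)
  then show ?thesis
    unfolding ad_term_def
    by (intro vanishes_below_star vanishes_below_cpow linear_valued_star linear_valued_cpow
        linear_valued_sign_twist linear_valued_neg vanishes_below_neg lam x v) simp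
qed

lemma star_conj_partial_sums:
  "star (star (\<Sum>i\<le>N. cscale (1 / fact i) (cpower i (sign_twist lam))) x)
        (\<Sum>j\<le>N. cscale (1 / fact j) (cpower j (- lam)))
   = (\<Sum>i\<le>N. \<Sum>j\<le>N. cscale (1 / fact i * (1 / fact j)) (ad_term lam x i j))"
proof -
  let ?A = "\<Sum>i\<le>N. cscale (1 / fact i) (cpower i (sign_twist lam))"
  have A: "linear_valued (star ?A x)"
    by (intro linear_valued_star linear_valued_sum linear_valued_cscale linear_valued_cpow
        linear_valued_sign_twist lam x)
  have "star (star ?A x) (\<Sum>j\<le>N. cscale (1 / fact j) (cpower j (- lam)))
      = (\<Sum>j\<le>N. cscale (1 / fact j) (star (star ?A x) (cpower j (- lam))))"
    unfolding star_sum_right[OF A] star_cscale_right[OF A] ..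
  also have "\<dots> = (\<Sum>j\<le>N. cscale (1 / fact j) (\<Sum>i\<le>N. cscale (1 / fact i) (ad_term lam x i j)))"
    unfolding star_sum_left star_cscale_left ad_term_def ..
  also have "\<dots> = (\<Sum>j\<le>N. \<Sum>i\<le>N. cscale (1 / fact i * (1 / fact j)) (ad_term lam x i j))"
    by (simp add: cscale_sum cscale_cscale mult.commute)
  also have "\<dots> = (\<Sum>i\<le>N. \<Sum>j\<le>N. cscale (1 / fact i * (1 / fact j)) (ad_term lam x i j))"
    by (rule sum.swap)
  finally show ?thesis .
qed

lemma cad_power_div_fact:
  "cscale (1 / fact k) ((cad s cf deg (-1) lam ^^ k) x)
     = (\<Sum>i\<le>k. cscale (1 / fact i * (1 / fact (k - i))) (ad_term lam x i (k - i)))"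
  unfolding cad_power_expansion cscale_sum cscale_cscale
  by (intro sum.cong refl) (simp only: inverse_fact_mult_binomial atMost_iff)

lemma conj_exp_eq_partial_sums:
  assumes v: "vanishes_below 1 lam"
  shows "star (star (fps_eval (sign_twist lam) (fps_exp 1)) x) (fps_eval (- lam) (fps_exp 1)) b
    = star (star (\<Sum>i\<le>wt b. cscale (1 / fact i) (cpower i (sign_twist lam))) x)
        (\<Sum>j\<le>wt b. cscale (1 / fact j) (cpower j (- lam))) b"
proof (rule star_local)
  fix c assume c: "wt c \<le> wt b"
  show "star (fps_eval (sign_twist lam) (fps_exp 1)) x c
      = star (\<Sum>i\<le>wt b. cscale (1 / fact i) (cpower i (sign_twist lam))) x c"
    using c by (intro star_local refl fps_eval_exp_eq_partial_sum linear_valued_sign_twist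
        vanishes_below_sign_twist lam v) simp
  show "fps_eval (- lam) (fps_exp 1) c = (\<Sum>j\<le>wt b. cscale (1 / fact j) (cpower j (- lam))) c"
    using c by (intro fps_eval_exp_eq_partial_sum linear_valued_neg vanishes_below_neg lam v)
qed

lemma cexp_ad_eq_conj:
  assumes v: "vanishes_below 1 lam"
  shows "cexp_ad s cf deg wt (-1) lam x
    = star (star (fps_eval (sign_twist lam) (fps_exp 1)) x) (fps_eval (- lam) (fps_exp 1))"
proof (intro ext)
  fix b y
  let ?N = "wt b" and ?T = "ad_term lam x"
  have "star (star (fps_eval (sign_twist lam) (fps_exp 1)) x) (fps_eval (- lam) (fps_exp 1)) b y
      = (\<Sum>i\<le>?N. \<Sum>j\<le>?N. s (1 / fact i * (1 / fact j)) (?T i j b y))"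
    by (simp add: conj_exp_eq_partial_sums[OF v] star_conj_partial_sums sum_fun_apply2 cscale_apply)
  also have "\<dots> = (\<Sum>k\<le>?N. \<Sum>i\<le>k. s (1 / fact i * (1 / fact (k - i))) (?T i (k - i) b y))"
    by (rule sum_atMost_triangle)
      (use vanishes_below_ad_term[OF v] in \<open>auto simp: vanishes_below_def\<close>)
  also have "\<dots> = (\<Sum>k\<le>?N. cscale (1 / fact k) ((cad s cf deg (-1) lam ^^ k) x) b y)"
    by (simp only: cad_power_div_fact sum_fun_apply2 cscale_apply)
  also have "\<dots> = cexp_ad s cf deg wt (-1) lam x b y"
    by (simp add: cexp_ad_def cscale_apply)
  finally show "cexp_ad s cf deg wt (-1) lam x b y
    = star (star (fps_eval (sign_twist lam) (fps_exp 1)) x) (fps_eval (- lam) (fps_exp 1)) b y" ..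
qed

end

end

section \<open>Degree 0 maps, the gauge group and the isotopy group\<close>

locale graded_conv_algebra = conv_algebra s cf e wt deg
  for s :: "'k::field_char_0 \<Rightarrow> 'v::ab_group_add \<Rightarrow> 'v"
    and cf :: "'b \<Rightarrow> 'b \<Rightarrow> 'b \<Rightarrow> 'k" and e :: 'b and wt :: "'b \<Rightarrow> nat" and deg :: "'b \<Rightarrow> int" +
  fixes Vg :: "int \<Rightarrow> 'v set"
  assumes subspace_Vg: "\<And>i. module.subspace s (Vg i)"
begin

lemma hom_end_linear: "hom_end s Vg q \<phi> \<Longrightarrow> Vector_Spaces.linear s s \<phi>"
  by (simp add: hom_end_def)

lemma hom_end_zero: "hom_end s Vg q (\<lambda>x. 0)"
  by (simp add: hom_end_def module_hom_zero subspace_0[OF subspace_Vg])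

lemma hom_end_id: "hom_end s Vg 0 id"
  by (simp add: hom_end_def linear_id)

lemma hom_end_diff: "hom_end s Vg q f \<Longrightarrow> hom_end s Vg q g \<Longrightarrow> hom_end s Vg q (\<lambda>x. f x - g x)"
  by (simp add: hom_end_def module_hom_sub subspace_diff[OF subspace_Vg])

lemma hom_end_scale: "hom_end s Vg q f \<Longrightarrow> hom_end s Vg q (\<lambda>x. s c (f x))"
  by (simp add: hom_end_def module_hom_scale subspace_scale[OF subspace_Vg])

lemma hom_end_add: "hom_end s Vg q f \<Longrightarrow> hom_end s Vg q g \<Longrightarrow> hom_end s Vg q (\<lambda>x. f x + g x)"
  by (simp add: hom_end_def module_hom_add subspace_add[OF subspace_Vg])

lemma hom_end_sum: "(\<And>i. i \<in> A \<Longrightarrow> hom_end s Vg q (F i)) \<Longrightarrow> hom_end s Vg q (\<lambda>x. \<Sum>i\<in>A. F i x)"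
  by (induct A rule: infinite_finite_induct) (simp_all add: hom_end_zero hom_end_add)

lemma hom_end_comp:
  assumes f: "hom_end s Vg q1 f" and g: "hom_end s Vg q2 g"
  shows "hom_end s Vg (q1 + q2) (\<lambda>x. f (g x))"
  unfolding hom_end_def
proof
  show "Vector_Spaces.linear s s (\<lambda>x. f (g x))"
    using Vector_Spaces.linear_compose[OF hom_end_linear[OF g] hom_end_linear[OF f]] by (simp add: o_def)
  show "\<forall>i. \<forall>x\<in>Vg i. f (g x) \<in> Vg (i + (q1 + q2))"
    using f g by (fastforce simp: hom_end_def add.assoc add.commute[of q1])
qed

abbreviation deg0 :: "('b \<Rightarrow> 'v \<Rightarrow> 'v) \<Rightarrow> bool" where
  "deg0 f \<equiv> conv_deg s Vg deg 0 f"

lemma linear_valued_deg0: "deg0 f \<Longrightarrow> linear_valued f"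
  by (auto simp: conv_deg_def linear_valued_def intro: hom_end_linear)

lemma deg0_star:
  assumes f: "deg0 f" and g: "deg0 g" shows "deg0 (star f g)"
  unfolding conv_deg_def star_apply split_def
proof (intro allI hom_end_sum hom_end_scale)
  fix b p assume "p \<in> cop_supp cf b"
  then have "deg b + 0 = deg (fst p) + 0 + (deg (snd p) + 0)"
    using cf_deg by (auto simp: cop_supp_def)
  then show "hom_end s Vg (deg b + 0) (\<lambda>x. f (fst p) (g (snd p) x))"
    using hom_end_comp f g by (simp add: conv_deg_def)
qed

lemma deg0_diff: "deg0 f \<Longrightarrow> deg0 g \<Longrightarrow> deg0 (f - g)"
  unfolding conv_deg_def fun_diff_def by (intro allI hom_end_diff) auto

lemma deg0_zero: "deg0 (\<lambda>b x. 0)"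
  by (simp add: conv_deg_def hom_end_zero)

lemma deg0_neg: "deg0 f \<Longrightarrow> deg0 (- f)"
  using deg0_diff[OF deg0_zero, of f] by (simp add: fun_diff_def fun_Compl_def)

lemma deg0_cunit: "deg0 (cunit e)"
  by (simp add: conv_deg_def cunit_def deg_e hom_end_zero hom_end_id)

lemma deg0_cpow: "deg0 w \<Longrightarrow> deg0 (cpower k w)"
  by (induct k) (simp_all add: deg0_cunit deg0_star)

lemma deg0_fps_eval: "deg0 w \<Longrightarrow> deg0 (fps_eval w p)"
  unfolding fps_eval_def
  by (intro allI hom_end_sum hom_end_scale conv_deg_def[THEN iffD2])
    (use deg0_cpow in \<open>auto simp: conv_deg_def\<close>)

lemma mem_g0_iff: "f \<in> g0 s Vg deg e \<longleftrightarrow> deg0 f \<and> vanishes_below 1 f"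
  by (simp add: g0_def vanishes_below_Suc_0_iff)

lemma mem_inf_isotopies_iff: "u \<in> inf_isotopies s Vg deg e \<longleftrightarrow> deg0 u \<and> u e = id"
  by (simp add: inf_isotopies_def)

lemma inf_isotopy_minus_unit:
  assumes "u \<in> inf_isotopies s Vg deg e"
  shows "u - cunit e \<in> g0 s Vg deg e"
  using assms
  by (simp add: mem_g0_iff mem_inf_isotopies_iff vanishes_below_Suc_0_iff deg0_diff deg0_cunit
      fun_eq_iff cunit_apply)

lemma g0_linear_valued: "f \<in> g0 s Vg deg e \<Longrightarrow> linear_valued f"
  by (simp add: mem_g0_iff linear_valued_deg0)

lemma g0_vanishes_below: "f \<in> g0 s Vg deg e \<Longrightarrow> vanishes_below 1 f"
  by (simp add: mem_g0_iff)

lemma neg_in_g0: "f \<in> g0 s Vg deg e \<Longrightarrow> - f \<in> g0 s Vg deg e"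
  by (simp add: mem_g0_iff deg0_neg vanishes_below_neg)

lemma cexp_in_inf_isotopies: "f \<in> g0 s Vg deg e \<Longrightarrow> cexp s cf deg e wt f \<in> inf_isotopies s Vg deg e"
  by (auto simp: mem_g0_iff mem_inf_isotopies_iff cexp_eq_fps_eval deg0_fps_eval fps_eval_apply_e)

lemma clog_in_g0: "u \<in> inf_isotopies s Vg deg e \<Longrightarrow> clog s cf deg e wt u \<in> g0 s Vg deg e"
  using inf_isotopy_minus_unit[of u]
  by (auto simp: mem_g0_iff vanishes_below_Suc_0_iff clog_eq_fps_eval deg0_fps_eval fun_eq_iff
      fps_eval_apply_e)

lemma star_in_inf_isotopies:
  "u \<in> inf_isotopies s Vg deg e \<Longrightarrow> v \<in> inf_isotopies s Vg deg e \<Longrightarrow> star u v \<in> inf_isotopies s Vg deg e"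
  by (auto simp: mem_inf_isotopies_iff deg0_star star_apply_e)

lemma cunit_in_inf_isotopies: "cunit e \<in> inf_isotopies s Vg deg e"
  by (simp add: mem_inf_isotopies_iff deg0_cunit cunit_apply fun_eq_iff)

lemma linear_valued_inf_isotopy: "u \<in> inf_isotopies s Vg deg e \<Longrightarrow> linear_valued u"
  by (simp add: mem_inf_isotopies_iff linear_valued_deg0)

lemma clog_cexp_g0: "f \<in> g0 s Vg deg e \<Longrightarrow> clog s cf deg e wt (cexp s cf deg e wt f) = f"
  by (rule clog_cexp[OF g0_linear_valued g0_vanishes_below])

lemma cexp_clog_inf_isotopy: "u \<in> inf_isotopies s Vg deg e \<Longrightarrow> cexp s cf deg e wt (clog s cf deg e wt u) = u"
  by (intro cexp_clog g0_linear_valued g0_vanishes_below inf_isotopy_minus_unit)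

lemma inj_on_cexp_g0: "inj_on (cexp s cf deg e wt) (g0 s Vg deg e)"
  by (metis inj_onI clog_cexp_g0)

lemma cexp_image_g0: "cexp s cf deg e wt ` g0 s Vg deg e = inf_isotopies s Vg deg e"
  using cexp_in_inf_isotopies cexp_clog_inf_isotopy clog_in_g0 by (metis image_eqI subsetI subset_antisym image_subsetI)

lemma cBCH_in_g0:
  "x \<in> g0 s Vg deg e \<Longrightarrow> y \<in> g0 s Vg deg e \<Longrightarrow> cBCH s cf deg e wt x y \<in> g0 s Vg deg e"
  unfolding cBCH_def by (intro clog_in_g0 star_in_inf_isotopies cexp_in_inf_isotopies)

lemma cexp_cBCH:
  "x \<in> g0 s Vg deg e \<Longrightarrow> y \<in> g0 s Vg deg e \<Longrightarrow>
     cexp s cf deg e wt (cBCH s cf deg e wt x y) = star (cexp s cf deg e wt x) (cexp s cf deg e wt y)"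
  unfolding cBCH_def by (intro cexp_clog_inf_isotopy star_in_inf_isotopies cexp_in_inf_isotopies)

lemma cexp_zero: "cexp s cf deg e wt (\<lambda>b x. 0) = cunit e"
  using fps_eval_zero[of "fps_exp 1"] by (simp add: cexp_eq_fps_eval zero_fun_def cscale_one)

lemma clog_cunit: "clog s cf deg e wt (cunit e) = (\<lambda>b x. 0)"
  using fps_eval_zero[of "fps_ln 1"] by (simp add: clog_eq_fps_eval cscale_zero zero_fun_def)

lemma group_isotopy_group: "group (isotopy_group s Vg cf deg e)"
proof (rule groupI, simp_all add: isotopy_group_def)
  fix x y z
  assume "x \<in> inf_isotopies s Vg deg e" "y \<in> inf_isotopies s Vg deg e" "z \<in> inf_isotopies s Vg deg e"
  then show "star (star x y) z = star x (star y z)"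
    by (simp add: star_assoc linear_valued_inf_isotopy)
next
  fix u assume u: "u \<in> inf_isotopies s Vg deg e"
  let ?l = "clog s cf deg e wt u"
  have l: "?l \<in> g0 s Vg deg e" by (rule clog_in_g0[OF u])
  have "star (cexp s cf deg e wt (- ?l)) (cexp s cf deg e wt ?l) = cunit e"
    by (rule cexp_neg_star(1)[OF g0_linear_valued[OF l] g0_vanishes_below[OF l]])
  then have "star (cexp s cf deg e wt (- ?l)) u = cunit e"
    by (simp add: cexp_clog_inf_isotopy[OF u])
  then show "\<exists>y\<in>inf_isotopies s Vg deg e. star y u = cunit e"
    using cexp_in_inf_isotopies[OF neg_in_g0[OF l]] by blast
qed (simp_all add: star_in_inf_isotopies cunit_in_inf_isotopies star_unit_left)

lemma group_gauge_group: "group (gauge_group s Vg cf deg e wt)"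
proof (rule groupI, simp_all add: gauge_group_def)
  show "(\<lambda>b x. 0) \<in> g0 s Vg deg e"
    by (simp add: mem_g0_iff deg0_zero vanishes_below_def)
next
  fix x y z assume xyz: "x \<in> g0 s Vg deg e" "y \<in> g0 s Vg deg e" "z \<in> g0 s Vg deg e"
  have "cexp s cf deg e wt (cBCH s cf deg e wt (cBCH s cf deg e wt x y) z)
      = cexp s cf deg e wt (cBCH s cf deg e wt x (cBCH s cf deg e wt y z))"
    using xyz
    by (simp add: cexp_cBCH cBCH_in_g0 star_assoc linear_valued_inf_isotopy cexp_in_inf_isotopies)
  then show "cBCH s cf deg e wt (cBCH s cf deg e wt x y) z = cBCH s cf deg e wt x (cBCH s cf deg e wt y z)"
    using inj_on_cexp_g0 xyz by (meson cBCH_in_g0 inj_onD)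
next
  fix x assume x: "x \<in> g0 s Vg deg e"
  show "cBCH s cf deg e wt (\<lambda>b x. 0) x = x"
    unfolding cBCH_def cexp_zero star_unit_left by (rule clog_cexp_g0[OF x])
  have "cBCH s cf deg e wt (- x) x = (\<lambda>b x. 0)"
    unfolding cBCH_def cexp_neg_star(1)[OF g0_linear_valued[OF x] g0_vanishes_below[OF x]]
    by (rule clog_cunit)
  then show "\<exists>y\<in>g0 s Vg deg e. cBCH s cf deg e wt y x = (\<lambda>b x. 0)"
    using neg_in_g0[OF x] by blast
qed (simp add: cBCH_in_g0)

lemma cexp_iso: "cexp s cf deg e wt \<in> iso (gauge_group s Vg cf deg e wt) (isotopy_group s Vg cf deg e)"
proof -
  have "cexp s cf deg e wt \<in> hom (gauge_group s Vg cf deg e wt) (isotopy_group s Vg cf deg e)"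
    by (auto simp: hom_def gauge_group_def isotopy_group_def cexp_in_inf_isotopies cexp_cBCH)
  moreover have "bij_betw (cexp s cf deg e wt) (g0 s Vg deg e) (inf_isotopies s Vg deg e)"
    by (simp add: bij_betw_def inj_on_cexp_g0 cexp_image_g0)
  ultimately show ?thesis
    by (simp add: iso_def gauge_group_def isotopy_group_def)
qed

lemma gauge_equation_iff_inf_morphism:
  assumes lam: "lam \<in> g0 s Vg deg e" and x: "linear_valued x" and y: "linear_valued y"
  shows "y = cexp_ad s cf deg wt (-1) lam x
    \<longleftrightarrow> inf_morphism s Vg cf deg x y (cexp s cf deg e wt lam)"
proof -
  let ?E = "cexp s cf deg e wt lam" and ?E' = "cexp s cf deg e wt (- lam)"
  let ?A = "cstar s cf deg (-1) ?E x"
  have l: "linear_valued lam" "vanishes_below 1 lam"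
    by (rule g0_linear_valued[OF lam], rule g0_vanishes_below[OF lam])
  have conj: "cexp_ad s cf deg wt (-1) lam x = star ?A ?E'"
    by (simp add: cexp_ad_eq_conj[OF l(1) x l(2)] cstar_minus_one sign_twist_fps_eval l(1)
        cexp_eq_fps_eval)
  have A: "linear_valued ?A"
    unfolding cstar_minus_one
    by (intro linear_valued_star linear_valued_sign_twist linear_valued_deg0 x)
      (use cexp_in_inf_isotopies[OF lam] in \<open>simp add: mem_inf_isotopies_iff\<close>)
  have "y = star ?A ?E' \<longleftrightarrow> ?A = star y ?E"
  proof
    assume "y = star ?A ?E'"
    then have "star y ?E = star ?A (star ?E' ?E)" by (simp add: star_assoc A)
    then show "?A = star y ?E" by (simp add: cexp_neg_star(1)[OF l] star_unit_right A)
  next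
    assume "?A = star y ?E"
    then have "star ?A ?E' = star y (star ?E ?E')" by (simp add: star_assoc y)
    then show "y = star ?A ?E'" by (simp add: cexp_neg_star(2)[OF l] star_unit_right y)
  qed
  moreover have "conv_deg s Vg deg 0 ?E"
    using cexp_in_inf_isotopies[OF lam] by (simp add: mem_inf_isotopies_iff)
  ultimately show ?thesis by (simp add: conj inf_morphism_def)
qed

lemma linear_valued_MC_shift:
  assumes d: "hom_end s Vg (-1) d" and a: "a \<in> MC s Vg d cf deg e"
  shows "linear_valued (cadd (cdelta e d) a)"
  unfolding linear_valued_def cadd_def
proof
  fix b
  have "Vector_Spaces.linear s s (cdelta e d b)"
    using d by (simp add: cdelta_def hom_end_linear module_hom_zero)
  moreover have "Vector_Spaces.linear s s (a b)"
    using a by (auto simp: MC_def conv_deg_def intro: hom_end_linear)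
  ultimately show "Vector_Spaces.linear s s (\<lambda>x. cdelta e d b x + a b x)"
    by (rule module_hom_add)
qed

lemma bij_betw_gauge_inf_morphisms:
  assumes x: "linear_valued x" and y: "linear_valued y"
  shows "bij_betw (cexp s cf deg e wt)
    {lam \<in> g0 s Vg deg e. y = cexp_ad s cf deg wt (-1) lam x}
    {f \<in> inf_isotopies s Vg deg e. inf_morphism s Vg cf deg x y f}"
proof -
  let ?P = "\<lambda>lam. y = cexp_ad s cf deg wt (-1) lam x"
  let ?Q = "inf_morphism s Vg cf deg x y"
  have "cexp s cf deg e wt ` {lam \<in> g0 s Vg deg e. ?P lam} = {f \<in> inf_isotopies s Vg deg e. ?Q f}"
  proof
    show "cexp s cf deg e wt ` {lam \<in> g0 s Vg deg e. ?P lam} \<subseteq> {f \<in> inf_isotopies s Vg deg e. ?Q f}"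
      using gauge_equation_iff_inf_morphism[OF _ x y] cexp_in_inf_isotopies by auto
    show "{f \<in> inf_isotopies s Vg deg e. ?Q f} \<subseteq> cexp s cf deg e wt ` {lam \<in> g0 s Vg deg e. ?P lam}"
    proof clarify
      fix u assume u: "u \<in> inf_isotopies s Vg deg e" "?Q u"
      then obtain lam where lam: "lam \<in> g0 s Vg deg e" "u = cexp s cf deg e wt lam"
        using cexp_image_g0 by (metis imageE)
      then have "?P lam" using gauge_equation_iff_inf_morphism[OF lam(1) x y] u(2) by simp
      then show "u \<in> cexp s cf deg e wt ` {lam \<in> g0 s Vg deg e. ?P lam}" using lam by blast
    qed
  qed
  then show ?thesis
    using inj_on_subset[OF inj_on_cexp_g0] by (auto simp: bij_betw_def)
qed

end

theorem theorem3p2: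
  fixes s :: "'k::field_char_0 \<Rightarrow> 'v::ab_group_add \<Rightarrow> 'v"
    and Vg :: "int \<Rightarrow> 'v set" and d :: "'v \<Rightarrow> 'v"
    and cf :: "'b \<Rightarrow> 'b \<Rightarrow> 'b \<Rightarrow> 'k" and e :: 'b and wt :: "'b \<Rightarrow> nat" and deg :: "'b \<Rightarrow> int"
  assumes "wg_coalgebra cf e wt deg"
    and "chain_complex s Vg d"
  shows "group (gauge_group s Vg cf deg e wt)
    \<and> group (isotopy_group s Vg cf deg e)
    \<and> cexp s cf deg e wt \<in> iso (gauge_group s Vg cf deg e wt) (isotopy_group s Vg cf deg e)
    \<and> (\<forall>a\<in>MC s Vg d cf deg e. \<forall>bt\<in>MC s Vg d cf deg e. \<forall>lam\<in>g0 s Vg deg e.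
          cadd (cdelta e d) bt = cexp_ad s cf deg wt (-1) lam (cadd (cdelta e d) a)
          \<longleftrightarrow> (cexp s cf deg e wt lam \<in> inf_isotopies s Vg deg e
               \<and> inf_morphism s Vg cf deg (cadd (cdelta e d) a) (cadd (cdelta e d) bt)
                   (cexp s cf deg e wt lam)))
    \<and> (\<forall>a\<in>MC s Vg d cf deg e. \<forall>bt\<in>MC s Vg d cf deg e.
          bij_betw (cexp s cf deg e wt)
            {lam\<in>g0 s Vg deg e. cadd (cdelta e d) bt = cexp_ad s cf deg wt (-1) lam (cadd (cdelta e d) a)}
            {f\<in>inf_isotopies s Vg deg e. inf_morphism s Vg cf deg (cadd (cdelta e d) a) (cadd (cdelta e d) bt) f})"
proof -
  have "vector_space s" and Vg: "\<And>i. module.subspace s (Vg i)" and d: "hom_end s Vg (-1) d"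
    using assms(2) by (auto simp: chain_complex_def graded_vs_def)
  then interpret graded_conv_algebra s cf e wt deg Vg
    by (intro graded_conv_algebra.intro conv_algebra.intro conv_algebra_axioms.intro
        graded_conv_algebra_axioms.intro assms(1))
  note MC_shift = linear_valued_MC_shift[OF d]
  show ?thesis
  proof (intro conjI ballI group_gauge_group group_isotopy_group cexp_iso
      bij_betw_gauge_inf_morphisms MC_shift)
    fix a bt lam assume "a \<in> MC s Vg d cf deg e" "bt \<in> MC s Vg d cf deg e" "lam \<in> g0 s Vg deg e"
    then show "cadd (cdelta e d) bt = cexp_ad s cf deg wt (-1) lam (cadd (cdelta e d) a)
        \<longleftrightarrow> (cexp s cf deg e wt lam \<in> inf_isotopies s Vg deg e
             \<and> inf_morphism s Vg cf deg (cadd (cdelta e d) a) (cadd (cdelta e d) bt)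
                 (cexp s cf deg e wt lam))"
      by (simp add: gauge_equation_iff_inf_morphism MC_shift cexp_in_inf_isotopies)
  qed
qed

end
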